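(* Let $\mathfrak{S}=(\mathcal{X},\mathsf{S},\gamma,(\Lambda_{a})_{a\in\mathcal{A}})$ be a spectral decomposition system for the Euclidean space $\mathfrak{H}$ with spectral-induced ordering mapping $\tau$, and let $x,y\in\mathcal{X}$. Then the following are equivalent: (i) $y\in\operatorname{conv}(\mathsf{S}\cdot x)$; (ii) $\langle y,z\rangle\leq\langle\tau(x),\tau(z)\rangle$ for every $z\in\mathcal{X}$. Moreover, if $x$ and $y$ both lie in the range of $\gamma$, then each of (i) and (ii) is equivalent to (iii) $\langle y-x,z\rangle\leq 0$ for every $z$ in the range of $\gamma$.
   Context: A Euclidean space is a finite-dimensional real inner product space; inner products are written $\langle\cdot,\cdot\rangle$ and norms $\|\cdot\|$. Let $\mathfrak{H}$ and $\mathcal{X}$ be Euclidean spaces, let $\mathsf{S}$ be a group acting on $\mathcal{X}$ by linear isometries, let $\gamma\colon\mathfrak{H}\to\mathcal{X}$, and let $(\Lambda_a)_{a\in\mathcal{A}}$ be a family of linear operators from $\mathcal{X}$ to $\mathfrak{H}$. The orbit of $x$ is $\mathsf{S}\cdot x=\{s\cdot x: s\in\mathsf{S}\}$; a map $f$ on $\mathcal{X}$ is $\mathsf{S}$-invariant if $f(s\cdot x)=f(x)$ for all $s,x$. The tuple is a spectral decomposition system for $\mathfrak{H}$ if: [A] every $\Lambda_a$ is an isometry; [B] there exists an $\mathsf{S}$-invariant $\tau\colon\mathcal{X}\to\mathcal{X}$ with $\tau(x)\in\mathsf{S}\cdot x$ for all $x$ and $\gamma\circ\Lambda_a=\tau$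 for all $a$; [C] for every $X\in\mathfrak{H}$ there is $a$ with $X=\Lambda_a\gamma(X)$; [D] $\langle X,Y\rangle\leq\langle\gamma(X),\gamma(Y)\rangle$ for all $X,Y\in\mathfrak{H}$. The map $\tau$ in [B] is the spectral-induced ordering mapping. $\operatorname{conv}$ denotes convex hull. *)

theory Defs
  imports "HOL-Analysis.Analysis" "HOL-Algebra.Group"
begin

definition isometric_linear_action ::
  "('g, 'm) monoid_scheme \<Rightarrow> ('g \<Rightarrow> 'x::euclidean_space \<Rightarrow> 'x) \<Rightarrow> bool" where
  "isometric_linear_action G act \<longleftrightarrow>
     group G \<and>
     act \<one>\<^bsub>G\<^esub> = id \<and>
     (\<forall>g\<in>carrier G. \<forall>h\<in>carrier G. act (g \<otimes>\<^bsub>G\<^esub> h) = act g \<circ> act h) \<and>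
     (\<forall>g\<in>carrier G. linear (act g) \<and> (\<forall>v. norm (act g v) = norm v))"

definition orbit :: "('g, 'm) monoid_scheme \<Rightarrow> ('g \<Rightarrow> 'x \<Rightarrow> 'x) \<Rightarrow> 'x \<Rightarrow> 'x set" where
  "orbit G act x = {act g x | g. g \<in> carrier G}"

definition S_invariant :: "('g, 'm) monoid_scheme \<Rightarrow> ('g \<Rightarrow> 'x \<Rightarrow> 'x) \<Rightarrow> ('x \<Rightarrow> 'b) \<Rightarrow> bool" where
  "S_invariant G act f \<longleftrightarrow> (\<forall>g\<in>carrier G. \<forall>x. f (act g x) = f x)"

definition spectral_decomposition_system ::
  "('g, 'm) monoid_scheme \<Rightarrow> ('g \<Rightarrow> 'x::euclidean_space \<Rightarrow> 'x) \<Rightarrow> ('h::euclidean_space \<Rightarrow> 'x)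
   \<Rightarrow> 'a set \<Rightarrow> ('a \<Rightarrow> 'x \<Rightarrow> 'h) \<Rightarrow> ('x \<Rightarrow> 'x) \<Rightarrow> bool" where
  "spectral_decomposition_system G act \<gamma> A \<Lambda> \<tau> \<longleftrightarrow>
     isometric_linear_action G act \<and>
     \<comment> \<open>[A]\<close>
     (\<forall>a\<in>A. linear (\<Lambda> a) \<and> (\<forall>v. norm (\<Lambda> a v) = norm v)) \<and>
     \<comment> \<open>[B]\<close>
     S_invariant G act \<tau> \<and> (\<forall>x. \<tau> x \<in> orbit G act x) \<and> (\<forall>a\<in>A. \<gamma> \<circ> \<Lambda> a = \<tau>) \<and>
     \<comment> \<open>[C]\<close>
     (\<forall>X. \<exists>a\<in>A. X = \<Lambda> a (\<gamma> X)) \<and>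
     \<comment> \<open>[D]\<close>
     (\<forall>X Y. inner X Y \<le> inner (\<gamma> X) (\<gamma> Y))"

end

theory Submission
  imports Defs
begin

text \<open>The orbit S\<cdot>x has support function z \<mapsto> \<langle>\<tau> x, \<tau> z\<rangle>: every orbit point w
  satisfies \<langle>w, z\<rangle> \<le> \<langle>\<tau> w, \<tau> z\<rangle> = \<langle>\<tau> x, \<tau> z\<rangle> by [A], [B] and [D], and if
  \<tau> x = s\<cdot>x and \<tau> z = t\<cdot>z, then the orbit point t\<inverse>s\<cdot>x attains this bound. The orbit is
  the fibre of \<tau> over \<tau> x, and it is compact: a limit point p of the orbit has
  \<parallel>p\<parallel> = \<parallel>x\<parallel> and \<langle>p, p\<rangle> \<le> \<langle>\<tau> x, \<tau> p\<rangle>, which forces \<tau> p = \<tau> x. So the convex hull of the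
  orbit is closed, and by the separating hyperplane theorem it is the intersection of the
  support halfspaces; this is (i) \<longleftrightarrow> (ii). As \<tau> fixes the range of \<gamma> and maps into it,
  (ii) turns into (iii) when x and y lie in that range.\<close>

lemma inner_eq_if_linear_norm_preserving:
  fixes f :: "'a::real_inner \<Rightarrow> 'b::real_inner"
  assumes "linear f" and "\<And>v. norm (f v) = norm v"
  shows "inner (f u) (f v) = inner u v"
  using assms by (simp add: dot_norm[of "f u"] dot_norm[of u] linear_add[symmetric])

lemma mem_convex_hull_iff_support_function:
  fixes S :: "'a::euclidean_space set"
  assumes "compact S"
    and le_support: "\<And>w z. w \<in> S \<Longrightarrow> inner w z \<le> h z"
    and support_attained: "\<And>z. \<exists>w\<in>S. inner w z = h z"
  shows "y \<in> convex hull S \<longleftrightarrow> (\<forall>z. inner y z \<le> h z)"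
proof
  have "convex (\<Inter>z. {q. inner q z \<le> h z})"
    by (intro convex_INT allI) (simp add: inner_commute convex_halfspace_le)
  then have "convex hull S \<subseteq> (\<Inter>z. {q. inner q z \<le> h z})"
    using le_support by (intro hull_minimal) auto
  then show "y \<in> convex hull S \<Longrightarrow> \<forall>z. inner y z \<le> h z"
    by blast
next
  assume y_le: "\<forall>z. inner y z \<le> h z"
  show "y \<in> convex hull S"
  proof (rule ccontr)
    assume "y \<notin> convex hull S"
    moreover have "closed (convex hull S)"
      using \<open>compact S\<close> by (simp add: compact_convex_hull compact_imp_closed)
    ultimately obtain a b where "inner a y < b" and b_less: "\<forall>q\<in>convex hull S. b < inner a q"
      using separating_hyperplane_closed_point convex_convex_hull by blast
    obtain w where "w \<in> S" and "inner w (- a) = h (- a)"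
      using support_attained by blast
    then have "inner a w \<le> inner a y"
      using y_le by (metis inner_commute inner_minus_right neg_le_iff_le)
    moreover have "b < inner a w"
      using b_less hull_inc[OF \<open>w \<in> S\<close>] by blast
    ultimately show False
      using \<open>inner a y < b\<close> by linarith
  qed
qed

locale isometric_action =
  fixes G :: "('g, 'm) monoid_scheme" (structure) and act :: "'g \<Rightarrow> 'x::euclidean_space \<Rightarrow> 'x"
  assumes isometric_linear_action: "isometric_linear_action G act"
begin

lemma group: "group G"
  using isometric_linear_action by (simp add: isometric_linear_action_def)

lemma act_mult: "g \<in> carrier G \<Longrightarrow> h \<in> carrier G \<Longrightarrow> act (g \<otimes> h) v = act g (act h v)"
  using isometric_linear_action by (simp add: isometric_linear_action_def)

lemma act_one: "act \<one> v = v"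
  using isometric_linear_action by (simp add: isometric_linear_action_def)

lemma norm_act: "g \<in> carrier G \<Longrightarrow> norm (act g v) = norm v"
  using isometric_linear_action by (simp add: isometric_linear_action_def)

lemma inner_act: "g \<in> carrier G \<Longrightarrow> inner (act g u) (act g v) = inner u v"
  using isometric_linear_action
  by (intro inner_eq_if_linear_norm_preserving) (simp_all add: isometric_linear_action_def)

lemma act_inv_act: "g \<in> carrier G \<Longrightarrow> act (inv g) (act g v) = v"
  using group by (simp flip: act_mult add: act_one group.inv_closed group.l_inv)

lemma act_act_inv: "g \<in> carrier G \<Longrightarrow> act g (act (inv g) v) = v"
  using group by (simp flip: act_mult add: act_one group.inv_closed group.r_inv)

lemma act_mem_orbit:
  assumes "g \<in> carrier G" and "q \<in> orbit G act x"
  shows "act g q \<in> orbit G act x"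
proof -
  obtain h where "h \<in> carrier G" and "q = act h x"
    using assms(2) unfolding orbit_def by blast
  moreover have "g \<otimes> h \<in> carrier G"
    using assms(1) \<open>h \<in> carrier G\<close> group by (simp add: group.is_monoid monoid.m_closed)
  ultimately show ?thesis
    using assms(1) unfolding orbit_def by (auto simp flip: act_mult)
qed

lemma norm_orbit: "q \<in> orbit G act x \<Longrightarrow> norm q = norm x"
  unfolding orbit_def by (auto simp: norm_act)

lemma bounded_orbit: "bounded (orbit G act x)"
  using norm_orbit by (metis bounded_iff order_refl)

end

locale spectral_decomposition =
  fixes G :: "('g, 'm) monoid_scheme" (structure)
    and act :: "'g \<Rightarrow> 'x::euclidean_space \<Rightarrow> 'x"
    and \<gamma> :: "'h::euclidean_space \<Rightarrow> 'x"
    and A :: "'a set"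
    and \<Lambda> :: "'a \<Rightarrow> 'x \<Rightarrow> 'h"
    and \<tau> :: "'x \<Rightarrow> 'x"
  assumes spectral_decomposition_system: "spectral_decomposition_system G act \<gamma> A \<Lambda> \<tau>"
begin

sublocale isometric_action G act
  using spectral_decomposition_system
  unfolding spectral_decomposition_system_def by unfold_locales blast

lemma inner_Lambda: "a \<in> A \<Longrightarrow> inner (\<Lambda> a u) (\<Lambda> a v) = inner u v"
  using spectral_decomposition_system unfolding spectral_decomposition_system_def
  by (blast intro: inner_eq_if_linear_norm_preserving)

lemma tau_act: "g \<in> carrier G \<Longrightarrow> \<tau> (act g v) = \<tau> v"
  using spectral_decomposition_system
  unfolding spectral_decomposition_system_def S_invariant_def by blast

lemma tau_mem_orbit: "\<tau> v \<in> orbit G act v"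
  using spectral_decomposition_system unfolding spectral_decomposition_system_def by blast

lemma gamma_Lambda: "a \<in> A \<Longrightarrow> \<gamma> (\<Lambda> a X) = \<tau> X"
  using spectral_decomposition_system unfolding spectral_decomposition_system_def
  by (metis comp_apply)

lemma Lambda_gamma: "\<exists>a\<in>A. \<Lambda> a (\<gamma> X) = X"
  using spectral_decomposition_system unfolding spectral_decomposition_system_def by metis

lemma inner_le_inner_gamma: "inner X Y \<le> inner (\<gamma> X) (\<gamma> Y)"
  using spectral_decomposition_system unfolding spectral_decomposition_system_def by blast

lemma inner_le_inner_tau: "inner u v \<le> inner (\<tau> u) (\<tau> v)"
proof -
  obtain a where "a \<in> A"
    using Lambda_gamma by blast
  then have "inner u v = inner (\<Lambda> a u) (\<Lambda> a v)"
    by (simp add: inner_Lambda)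
  also have "\<dots> \<le> inner (\<gamma> (\<Lambda> a u)) (\<gamma> (\<Lambda> a v))"
    by (rule inner_le_inner_gamma)
  finally show ?thesis
    using \<open>a \<in> A\<close> by (simp add: gamma_Lambda)
qed

lemma tau_fixes_range_gamma:
  assumes "v \<in> range \<gamma>"
  shows "\<tau> v = v"
proof -
  obtain X where "v = \<gamma> X"
    using assms by blast
  moreover obtain a where "a \<in> A" and "\<Lambda> a (\<gamma> X) = X"
    using Lambda_gamma by blast
  ultimately show ?thesis
    using gamma_Lambda[of a "\<gamma> X"] by simp
qed

lemma tau_in_range_gamma: "\<tau> v \<in> range \<gamma>"
proof -
  obtain a where "a \<in> A"
    using Lambda_gamma by blast
  then show ?thesis
    using gamma_Lambda[of a v] by (metis rangeI)
qed

lemma norm_tau: "norm (\<tau> v) = norm v"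
  using tau_mem_orbit by (rule norm_orbit)

lemma orbit_eq_tau_fibre: "orbit G act x = {p. \<tau> p = \<tau> x}"
proof safe
  fix p assume "p \<in> orbit G act x"
  then show "\<tau> p = \<tau> x"
    unfolding orbit_def by (auto simp: tau_act)
next
  fix p assume "\<tau> p = \<tau> x"
  obtain t where "t \<in> carrier G" and "\<tau> p = act t p"
    using tau_mem_orbit[of p] unfolding orbit_def by blast
  then have "p = act (inv t) (\<tau> x)"
    using \<open>\<tau> p = \<tau> x\<close> by (simp add: act_inv_act)
  then show "p \<in> orbit G act x"
    using \<open>t \<in> carrier G\<close> tau_mem_orbit group by (simp add: act_mem_orbit group.inv_closed)
qed

lemma inner_orbit_le: "q \<in> orbit G act x \<Longrightarrow> inner q z \<le> inner (\<tau> x) (\<tau> z)"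
  using inner_le_inner_tau[of q z] by (simp add: orbit_eq_tau_fibre)

lemma orbit_support_attained: "\<exists>w\<in>orbit G act x. inner w z = inner (\<tau> x) (\<tau> z)"
proof -
  obtain t where "t \<in> carrier G" and "\<tau> z = act t z"
    using tau_mem_orbit[of z] unfolding orbit_def by blast
  define w where "w = act (inv t) (\<tau> x)"
  have "w \<in> orbit G act x"
    unfolding w_def using \<open>t \<in> carrier G\<close> tau_mem_orbit group by (simp add: act_mem_orbit group.inv_closed)
  moreover have "inner w z = inner (act t w) (act t z)"
    using \<open>t \<in> carrier G\<close> by (simp add: inner_act)
  then have "inner w z = inner (\<tau> x) (\<tau> z)"
    using \<open>t \<in> carrier G\<close> \<open>\<tau> z = act t z\<close> by (simp add: w_def act_act_inv)
  ultimately show ?thesis ..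
qed

lemma tau_eq_if_inner_self_le:
  assumes "norm p = norm x" and "inner p p \<le> inner (\<tau> x) (\<tau> p)"
  shows "\<tau> p = \<tau> x"
proof -
  have "inner p p = (norm x)\<^sup>2"
    by (metis assms(1) power2_norm_eq_inner)
  have "(norm (\<tau> x - \<tau> p))\<^sup>2 = inner (\<tau> x) (\<tau> x) + inner (\<tau> p) (\<tau> p) - 2 * inner (\<tau> x) (\<tau> p)"
    by (simp add: power2_norm_eq_inner inner_diff_left inner_diff_right inner_commute)
  also have "\<dots> = (norm x)\<^sup>2 + (norm p)\<^sup>2 - 2 * inner (\<tau> x) (\<tau> p)"
    by (simp add: norm_tau flip: power2_norm_eq_inner)
  also have "\<dots> \<le> 0"
    using assms \<open>inner p p = (norm x)\<^sup>2\<close> by simp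
  finally show ?thesis
    by simp
qed

lemma closed_orbit: "closed (orbit G act x)"
proof -
  have "p \<in> orbit G act x" if "p \<in> closure (orbit G act x)" for p
  proof -
    have "closed {q. inner q p \<le> inner (\<tau> x) (\<tau> p)}"
      using closed_halfspace_le[of p] by (simp add: inner_commute)
    then have "closure (orbit G act x) \<subseteq> {q. inner q p \<le> inner (\<tau> x) (\<tau> p)}"
      using inner_orbit_le by (intro closure_minimal) auto
    moreover have "closure (orbit G act x) \<subseteq> sphere 0 (norm x)"
      using norm_orbit by (intro closure_minimal) auto
    ultimately have "\<tau> p = \<tau> x"
      using that by (intro tau_eq_if_inner_self_le) auto
    then show ?thesis
      by (simp add: orbit_eq_tau_fibre)
  qed
  then show ?thesis
    using closure_subset_eq by blast
qed

lemma compact_orbit: "compact (orbit G act x)"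
  by (simp add: compact_eq_bounded_closed bounded_orbit closed_orbit)

lemma mem_convex_hull_orbit_iff:
  "y \<in> convex hull (orbit G act x) \<longleftrightarrow> (\<forall>z. inner y z \<le> inner (\<tau> x) (\<tau> z))"
  by (rule mem_convex_hull_iff_support_function)
    (simp_all add: compact_orbit inner_orbit_le orbit_support_attained)

lemma inner_le_tau_iff_on_range_gamma:
  assumes "x \<in> range \<gamma>" and "y \<in> range \<gamma>"
  shows "(\<forall>z. inner y z \<le> inner (\<tau> x) (\<tau> z)) \<longleftrightarrow> (\<forall>z\<in>range \<gamma>. inner (y - x) z \<le> 0)"
proof
  assume le_tau: "\<forall>z. inner y z \<le> inner (\<tau> x) (\<tau> z)"
  show "\<forall>z\<in>range \<gamma>. inner (y - x) z \<le> 0"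
  proof
    fix z assume "z \<in> range \<gamma>"
    then show "inner (y - x) z \<le> 0"
      using le_tau[rule_format, of z] assms by (simp add: tau_fixes_range_gamma inner_diff_left)
  qed
next
  assume le_zero: "\<forall>z\<in>range \<gamma>. inner (y - x) z \<le> 0"
  show "\<forall>z. inner y z \<le> inner (\<tau> x) (\<tau> z)"
  proof
    fix z
    have "inner y z \<le> inner (\<tau> y) (\<tau> z)"
      by (rule inner_le_inner_tau)
    also have "\<dots> \<le> inner (\<tau> x) (\<tau> z)"
      using assms le_zero[rule_format, OF tau_in_range_gamma[of z]]
      by (simp add: tau_fixes_range_gamma inner_diff_left)
    finally show "inner y z \<le> inner (\<tau> x) (\<tau> z)" .
  qed
qed

end

theorem proposition3p8:
  fixes G :: "('g, 'm) monoid_scheme"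
    and act :: "'g \<Rightarrow> 'x::euclidean_space \<Rightarrow> 'x"
    and \<gamma> :: "'h::euclidean_space \<Rightarrow> 'x"
    and A :: "'a set"
    and \<Lambda> :: "'a \<Rightarrow> 'x \<Rightarrow> 'h"
    and \<tau> :: "'x \<Rightarrow> 'x"
    and x y :: 'x
  assumes "spectral_decomposition_system G act \<gamma> A \<Lambda> \<tau>"
  shows "(y \<in> convex hull (orbit G act x) \<longleftrightarrow> (\<forall>z. inner y z \<le> inner (\<tau> x) (\<tau> z)))
       \<and> (x \<in> range \<gamma> \<and> y \<in> range \<gamma> \<longrightarrow>
            ((y \<in> convex hull (orbit G act x) \<longleftrightarrow> (\<forall>z\<in>range \<gamma>. inner (y - x) z \<le> 0))
             \<and> ((\<forall>z. inner y z \<le> inner (\<tau> x) (\<tau> z)) \<longleftrightarrow> (\<forall>z\<in>range \<gamma>. inner (y - x) z \<le> 0))))"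
proof -
  interpret spectral_decomposition G act \<gamma> A \<Lambda> \<tau>
    using assms by unfold_locales
  show ?thesis
    using mem_convex_hull_orbit_iff inner_le_tau_iff_on_range_gamma by blast
qed

end
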